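(* Consider agent $i$ with $N_i$ neighbors $j\in\mathcal N_i$, and functions $f_i:W\times W^{N_i}\to\mathbb{R}^2$ ($W\subseteq\mathbb{R}^2$) satisfying $\|f_i(x,\bar x)\|\le M$, $\|f_i(x,\bar x)-f_i(y,\bar x)\|\le L_i\|x-y\|$ and $\|f_i(x,\bar x)-f_i(x,\bar y)\|\le \bar L_i\|\bar x-\bar y\|$ for all $x,y\in W$, $\bar x,\bar y\in W^{N_i}$, with $L_i,\bar L_i>0$. Fix $x_{\mathrm{des}}\in\mathbb{R}^2$ and set $g_i(e,\bar x,u)=f_i(e+x_{\mathrm{des}},\bar x)+u$. Let $t_{k_z}\in\mathbb{R}$, $T_z>0$, and let $u_i:[t_{k_z},t_{k_z}+T_z]\to\mathbb{R}^2$ be piecewise continuous with $\|u_i(s)\|\le u_{\max}$. Let $\bar x_i(\cdot)$ be the actual trajectory of the neighbors' stacked positions and $\hat{\bar x}_i(\cdot)$ a predicted one, both in $W^{N_i}$, such that each neighbor's actual and predicted positions satisfy $\|x_j(s)-\hat x_j(s)\|\le 2\sqrt3R$ for all $s$ and $j\in\mathcal N_i$, where $R>0$ is the side length of the hexagonal cells. Let $e_i(\cdot)$ solve $\dot e_i=g_i(e_i,\bar x_i(s),u_i(s))$ and $\hat e_i(\cdot)$ solve $\dot{\hat e}_i=g_i(\hat e_i,\hat{\bar x}_i(s),u_i(s))$ on $[t_{k_z},t_{k_z}+T_z]$, with the same initial value $\hat e_i(t_{k_z})=e_i(t_{k_z})$ (and $e_i+x_{\mathrm{des}},\hat e_i+x_{\mathrm{des}}\in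 W$). Then for every $s\in[t_{k_z},t_{k_z}+T_z]$, $$\|e_i(s)-\hat e_i(s)\|\le \rho_i(s-t_{k_z}),$$ where $$\rho_i(y)=\min\Big\{\widetilde\rho_i\big[e^{L_iy}-1\big],\ 2\|e_i(t_{k_z})\|+2y(M+u_{\max})\Big\},\qquad \widetilde\rho_i=\frac{2\sqrt3 R\,\bar L_i N_i}{L_i}.$$
   Context: $\|\cdot\|$ denotes the Euclidean norm; $\bar x\in W^{N_i}\subseteq\mathbb{R}^{2N_i}$ is the stacked vector of the $N_i$ neighbors' positions and its norm is the Euclidean norm on $\mathbb{R}^{2N_i}$. *)

theory Defs
  imports "HOL-Analysis.Analysis"
begin

text \<open>Neighbor positions are stacked as (real^2)^'n with CARD('n) = N_i; the library norm on
  this type is the Euclidean norm of the stacked vector in R^(2 N_i).\<close>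
definition g_dyn :: "(real^2 \<Rightarrow> (real^2)^'n \<Rightarrow> real^2) \<Rightarrow> real^2
    \<Rightarrow> real^2 \<Rightarrow> (real^2)^'n \<Rightarrow> real^2 \<Rightarrow> real^2" where
  "g_dyn f xdes e xb u = f (e + xdes) xb + u"

definition piecewise_continuous_on :: "real \<Rightarrow> real \<Rightarrow> (real \<Rightarrow> 'a::topological_space) \<Rightarrow> bool" where
  "piecewise_continuous_on a b u \<longleftrightarrow>
     (\<exists>S. finite S \<and> (\<forall>x\<in>{a..b} - S. continuous (at x within {a..b}) u))"

definition in_stack :: "(real^2) set \<Rightarrow> (real^2)^'n \<Rightarrow> bool" where
  "in_stack W xb \<longleftrightarrow> (\<forall>j. xb $ j \<in> W)"

text \<open>Solution of e' = g(e, xbar(s), u(s)) on [t0, t0+T]: continuous, and differentiable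
  with the prescribed derivative except at finitely many points (discontinuities of u).\<close>
definition solves_on :: "real \<Rightarrow> real \<Rightarrow> (real \<Rightarrow> real^2) \<Rightarrow> (real \<Rightarrow> real^2 \<Rightarrow> real^2) \<Rightarrow> bool" where
  "solves_on a b e F \<longleftrightarrow> continuous_on {a..b} e \<and>
     (\<exists>D. finite D \<and> (\<forall>s\<in>{a..b} - D. (e has_vector_derivative F s (e s)) (at s within {a..b})))"

end

theory Submission
  imports Defs
begin

text \<open>Both solutions satisfy the integral equation of their dynamics. The difference of the
  vector fields is at most \<open>L\<parallel>e - e\<^sub>h\<parallel> + K\<close>, where the constant \<open>K\<close> bounds the mismatch caused by
  the neighbours' prediction error (at most \<open>2\<surd>3 R\<close> per neighbour, hence at most \<open>2\<surd>3 R N\<close> for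
  the stacked vector). Gronwall's inequality then gives \<open>\<parallel>e - e\<^sub>h\<parallel> \<le> K/L (e\<^sup>L\<^sup>y - 1)\<close>.
  Independently, each solution moves at speed at most \<open>M + u\<^sub>m\<^sub>a\<^sub>x\<close>, which gives the linear bound.\<close>

lemma solves_on_has_integral:
  assumes "solves_on a b y F" "a \<le> s" "s \<le> b"
  shows "((\<lambda>x. F x (y x)) has_integral (y s - y a)) {a..s}"
proof -
  from assms(1) obtain D where cont: "continuous_on {a..b} y" and D: "finite D"
    and deriv: "\<And>x. x \<in> {a..b} - D \<Longrightarrow> (y has_vector_derivative F x (y x)) (at x within {a..b})"
    unfolding solves_on_def by blast
  show ?thesis
  proof (rule fundamental_theorem_of_calculus_interior_strong[OF D assms(2)])
    fix x assume "x \<in> {a<..<s} - D"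
    with assms(2,3) deriv[of x] show "(y has_vector_derivative F x (y x)) (at x)"
      by (simp add: at_within_Icc_at)
  next
    show "continuous_on {a..s} y" using cont assms(3) by (auto intro: continuous_on_subset)
  qed
qed

lemma solves_on_norm_increment_le:
  assumes sol: "solves_on a b y F" and s: "s \<in> {a..b}"
    and bound: "\<And>x. x \<in> {a..b} \<Longrightarrow> norm (F x (y x)) \<le> B"
  shows "norm (y s - y a) \<le> (s - a) * B"
proof -
  have int: "((\<lambda>x. F x (y x)) has_integral (y s - y a)) {a..s}"
    using solves_on_has_integral[OF sol] s by auto
  have "norm (y s - y a) = norm (integral {a..s} (\<lambda>x. F x (y x)))"
    using int by (simp add: integral_unique)
  also have "\<dots> \<le> integral {a..s} (\<lambda>x. B)"
    using int s bound by (intro integral_norm_bound_integral) auto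
  also have "\<dots> = (s - a) * B" using s by simp
  finally show ?thesis .
qed

lemma norm_vec_le_card_mult:
  fixes x :: "'a::real_normed_vector ^ 'n"
  assumes "\<And>j. norm (x $ j) \<le> c"
  shows "norm x \<le> real CARD('n) * c"
proof -
  have "norm x \<le> (\<Sum>j\<in>UNIV. norm (x $ j))"
    unfolding norm_vec_def by (rule L2_set_le_sum) simp
  also have "\<dots> \<le> (\<Sum>j\<in>(UNIV::'n set). c)" by (rule sum_mono) (use assms in auto)
  finally show ?thesis by simp
qed

lemma first_zero_from_below:
  fixes h :: "real \<Rightarrow> real"
  assumes cont: "continuous_on {a..b} h" and neg: "h a < 0"
    and s: "s \<in> {a..b}" "0 \<le> h s"
  obtains c where "c \<in> {a<..b}" "h c = 0" "\<And>x. x \<in> {a..c} \<Longrightarrow> h x \<le> 0"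
proof -
  define A where "A = {a..b} \<inter> h -` {0..}"
  have closed_A: "closed A"
    unfolding A_def by (rule continuous_closed_preimage) (use cont in auto)
  have bdd_A: "bdd_below A" unfolding A_def by (rule bdd_belowI[of _ a]) auto
  define c where "c = Inf A"
  have "s \<in> A" using s unfolding A_def by auto
  then have c_A: "c \<in> A" unfolding c_def using closed_contains_Inf[OF _ bdd_A closed_A] by blast
  then have c_ab: "c \<in> {a..b}" and hc: "0 \<le> h c" unfolding A_def by auto
  have "c \<noteq> a" using hc neg by auto
  with c_ab have ac: "a < c" by auto
  have before_c: "h x < 0" if "x \<in> {a..<c}" for x
    using that c_ab cInf_lower[OF _ bdd_A, of x] unfolding A_def c_def by force
  have "{a..<c} \<subseteq> {a..c} \<inter> h -` {..0}" using before_c by force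
  moreover have "closed ({a..c} \<inter> h -` {..0})"
    using c_ab by (intro continuous_closed_preimage) (auto intro: continuous_on_subset[OF cont])
  ultimately have "closure {a..<c} \<subseteq> {a..c} \<inter> h -` {..0}" by (rule closure_minimal)
  then have le: "\<And>x. x \<in> {a..c} \<Longrightarrow> h x \<le> 0" using ac by auto
  show ?thesis
  proof
    show "c \<in> {a<..b}" using ac c_ab by simp
    show "h c = 0" using hc le[of c] ac by simp
  qed (rule le)
qed

lemma gronwall_margin:
  fixes v :: "real \<Rightarrow> real"
  assumes cont: "continuous_on {a..b} v" and L: "L > 0" and eps: "eps > 0"
    and integral_ineq: "\<And>s. s \<in> {a..b} \<Longrightarrow> v s \<le> integral {a..s} (\<lambda>x. L * v x + K)"
    and s: "s \<in> {a..b}"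
  shows "v s \<le> K / L * (exp (L * (s - a)) - 1) + eps * exp (L * (s - a))"
proof (rule ccontr)
  \<comment> \<open>\<open>psi\<close> solves \<open>psi' = L psi + K\<close>, \<open>psi a = eps\<close>; \<open>v\<close> cannot catch up with it.\<close>
  define psi where "psi x = (K / L + eps) * exp (L * (x - a)) - K / L" for x
  have psi_deriv: "(psi has_vector_derivative L * psi x + K) (at x within S)" for x S
  proof -
    have "(psi has_real_derivative (K / L + eps) * (exp (L * (x - a)) * L)) (at x)"
      unfolding psi_def by (auto intro!: derivative_eq_intros)
    moreover have "(K / L + eps) * (exp (L * (x - a)) * L) = L * psi x + K"
      unfolding psi_def using L by (simp add: field_simps)
    ultimately show ?thesis
      by (simp add: has_real_derivative_iff_has_vector_derivative has_vector_derivative_at_within)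
  qed
  have psi_a: "psi a = eps" unfolding psi_def by simp
  have "v a \<le> 0" using integral_ineq[of a] s by simp
  then have start: "v a - psi a < 0" using psi_a eps by simp
  assume "\<not> ?thesis"
  then have "0 \<le> v s - psi s" unfolding psi_def by (simp add: algebra_simps)
  moreover have "continuous_on {a..b} (\<lambda>x. v x - psi x)"
    unfolding psi_def by (intro continuous_intros cont)
  ultimately obtain c where c: "c \<in> {a<..b}" "v c - psi c = 0"
    and below: "\<And>x. x \<in> {a..c} \<Longrightarrow> v x - psi x \<le> 0"
    using first_zero_from_below[of a b "\<lambda>x. v x - psi x" s] start s by blast
  have psi_int: "((\<lambda>x. L * psi x + K) has_integral (psi c - psi a)) {a..c}"
    using c by (intro fundamental_theorem_of_calculus) (auto intro: psi_deriv)
  have "continuous_on {a..c} (\<lambda>x. L * v x + K)"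
    using c by (intro continuous_intros continuous_on_subset[OF cont]) auto
  then have "integral {a..c} (\<lambda>x. L * v x + K) \<le> integral {a..c} (\<lambda>x. L * psi x + K)"
    using has_integral_integrable[OF psi_int] below L
    by (intro integral_le) (auto intro: integrable_continuous_interval simp: mult_left_mono)
  then have "v c \<le> psi c - eps"
    using integral_ineq[of c] c psi_int psi_a by (simp add: integral_unique)
  with c eps show False by simp
qed

lemma gronwall_integral:
  fixes v :: "real \<Rightarrow> real"
  assumes "continuous_on {a..b} v" "L > 0"
    and "\<And>s. s \<in> {a..b} \<Longrightarrow> v s \<le> integral {a..s} (\<lambda>x. L * v x + K)"
    and "s \<in> {a..b}"
  shows "v s \<le> K / L * (exp (L * (s - a)) - 1)"
proof (rule field_le_epsilon)
  fix eps :: real assume "eps > 0"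
  then show "v s \<le> K / L * (exp (L * (s - a)) - 1) + eps"
    using gronwall_margin[OF assms(1,2) _ assms(3,4), where eps = "eps / exp (L * (s - a))"]
    by simp
qed

lemma solves_on_diff_gronwall:
  assumes sol1: "solves_on a b y1 F1" and sol2: "solves_on a b y2 F2"
    and init: "y1 a = y2 a" and L: "L > 0"
    and fields: "\<And>x. x \<in> {a..b} \<Longrightarrow>
                   norm (F1 x (y1 x) - F2 x (y2 x)) \<le> L * norm (y1 x - y2 x) + K"
    and s: "s \<in> {a..b}"
  shows "norm (y1 s - y2 s) \<le> K / L * (exp (L * (s - a)) - 1)"
proof (rule gronwall_integral[OF _ L _ s])
  have "continuous_on {a..b} y1" "continuous_on {a..b} y2"
    using sol1 sol2 unfolding solves_on_def by auto
  then have cont: "continuous_on {a..b} (\<lambda>x. y1 x - y2 x)" by (rule continuous_on_diff)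
  then show "continuous_on {a..b} (\<lambda>x. norm (y1 x - y2 x))" by (rule continuous_on_norm)
  fix t assume t: "t \<in> {a..b}"
  have int: "((\<lambda>x. F1 x (y1 x) - F2 x (y2 x)) has_integral y1 t - y2 t) {a..t}"
    using has_integral_diff[OF solves_on_has_integral[OF sol1] solves_on_has_integral[OF sol2]]
      t init by auto
  have "continuous_on {a..t} (\<lambda>x. L * norm (y1 x - y2 x) + K)"
    using t by (intro continuous_intros continuous_on_subset[OF cont]) auto
  then have "norm (integral {a..t} (\<lambda>x. F1 x (y1 x) - F2 x (y2 x)))
      \<le> integral {a..t} (\<lambda>x. L * norm (y1 x - y2 x) + K)"
    using has_integral_integrable[OF int] t fields
    by (intro integral_norm_bound_integral) (auto intro: integrable_continuous_interval)
  then show "norm (y1 t - y2 t) \<le> integral {a..t} (\<lambda>x. L * norm (y1 x - y2 x) + K)"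
    using int by (simp add: integral_unique)
qed

lemma g_dyn_norm_le:
  assumes "\<And>x xbar. x \<in> W \<Longrightarrow> in_stack W xbar \<Longrightarrow> norm (f x xbar) \<le> M"
    and "z + xdes \<in> W" "in_stack W xbar" "norm v \<le> umax"
  shows "norm (g_dyn f xdes z xbar v) \<le> M + umax"
  using norm_triangle_ineq[of "f (z + xdes) xbar" v] assms unfolding g_dyn_def by (smt (verit))

lemma g_dyn_diff_norm_le:
  assumes f_lip1: "\<And>x y xbar. x \<in> W \<Longrightarrow> y \<in> W \<Longrightarrow> in_stack W xbar \<Longrightarrow>
                   norm (f x xbar - f y xbar) \<le> L * norm (x - y)"
    and f_lip2: "\<And>x xbar ybar. x \<in> W \<Longrightarrow> in_stack W xbar \<Longrightarrow> in_stack W ybar \<Longrightarrow>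
                   norm (f x xbar - f x ybar) \<le> Lb * norm (xbar - ybar)"
    and W: "y + xdes \<in> W" "z + xdes \<in> W" "in_stack W ybar" "in_stack W zbar"
  shows "norm (g_dyn f xdes y ybar v - g_dyn f xdes z zbar v)
           \<le> L * norm (y - z) + Lb * norm (ybar - zbar)"
proof -
  have "g_dyn f xdes y ybar v - g_dyn f xdes z zbar v
      = (f (y + xdes) ybar - f (z + xdes) ybar) + (f (z + xdes) ybar - f (z + xdes) zbar)"
    unfolding g_dyn_def by simp
  also have "norm \<dots> \<le> norm (f (y + xdes) ybar - f (z + xdes) ybar)
                        + norm (f (z + xdes) ybar - f (z + xdes) zbar)"
    by (rule norm_triangle_ineq)
  also have "\<dots> \<le> L * norm ((y + xdes) - (z + xdes)) + Lb * norm (ybar - zbar)"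
    using f_lip1[OF W(1,2,3)] f_lip2[OF W(2,3,4)] by (rule add_mono)
  finally show ?thesis by simp
qed

theorem lemma2:
  fixes W :: "(real^2) set"
    and f :: "real^2 \<Rightarrow> (real^2)^'n \<Rightarrow> real^2"
    and M L Lb R umax t0 T :: real
    and xdes :: "real^2"
    and u :: "real \<Rightarrow> real^2"
    and xb xh :: "real \<Rightarrow> (real^2)^'n"
    and e eh :: "real \<Rightarrow> real^2"
  assumes f_bound: "\<And>x xbar. x \<in> W \<Longrightarrow> in_stack W xbar \<Longrightarrow> norm (f x xbar) \<le> M"
    and f_lip1: "\<And>x y xbar. x \<in> W \<Longrightarrow> y \<in> W \<Longrightarrow> in_stack W xbar \<Longrightarrow>
                   norm (f x xbar - f y xbar) \<le> L * norm (x - y)"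
    and f_lip2: "\<And>x xbar ybar. x \<in> W \<Longrightarrow> in_stack W xbar \<Longrightarrow> in_stack W ybar \<Longrightarrow>
                   norm (f x xbar - f x ybar) \<le> Lb * norm (xbar - ybar)"
    and L_pos: "L > 0" and Lb_pos: "Lb > 0"
    and T_pos: "T > 0" and R_pos: "R > 0"
    and u_pc: "piecewise_continuous_on t0 (t0 + T) u"
    and u_bound: "\<And>s. s \<in> {t0..t0 + T} \<Longrightarrow> norm (u s) \<le> umax"
    and xb_W: "\<And>s. s \<in> {t0..t0 + T} \<Longrightarrow> in_stack W (xb s)"
    and xh_W: "\<And>s. s \<in> {t0..t0 + T} \<Longrightarrow> in_stack W (xh s)"
    and pred_err: "\<And>s j. s \<in> {t0..t0 + T} \<Longrightarrow> norm (xb s $ j - xh s $ j) \<le> 2 * sqrt 3 * R"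
    and e_sol: "solves_on t0 (t0 + T) e (\<lambda>s z. g_dyn f xdes z (xb s) (u s))"
    and eh_sol: "solves_on t0 (t0 + T) eh (\<lambda>s z. g_dyn f xdes z (xh s) (u s))"
    and init: "eh t0 = e t0"
    and e_W: "\<And>s. s \<in> {t0..t0 + T} \<Longrightarrow> e s + xdes \<in> W"
    and eh_W: "\<And>s. s \<in> {t0..t0 + T} \<Longrightarrow> eh s + xdes \<in> W"
  shows "\<forall>s \<in> {t0..t0 + T}.
           norm (e s - eh s) \<le>
             min ((2 * sqrt 3 * R * Lb * real CARD('n) / L) * (exp (L * (s - t0)) - 1))
                 (2 * norm (e t0) + 2 * (s - t0) * (M + umax))"
proof
  fix s assume s: "s \<in> {t0..t0 + T}"
  define K where "K = 2 * sqrt 3 * R * Lb * real CARD('n)"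
  have fields: "norm (g_dyn f xdes (e x) (xb x) (u x) - g_dyn f xdes (eh x) (xh x) (u x))
      \<le> L * norm (e x - eh x) + K" if x: "x \<in> {t0..t0 + T}" for x
  proof -
    have "norm (xb x - xh x) \<le> real CARD('n) * (2 * sqrt 3 * R)"
      by (rule norm_vec_le_card_mult) (use pred_err x in simp)
    then have "Lb * norm (xb x - xh x) \<le> K"
      unfolding K_def using Lb_pos by (auto simp: algebra_simps dest: mult_left_mono)
    then show ?thesis
      using g_dyn_diff_norm_le[OF f_lip1 f_lip2 e_W[OF x] eh_W[OF x] xb_W[OF x] xh_W[OF x],
          of "u x"]
      by linarith
  qed
  note speed = g_dyn_norm_le[where f = f and W = W and M = M, OF f_bound]
  have "norm (e s - eh s) \<le> K / L * (exp (L * (s - t0)) - 1)"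
    using solves_on_diff_gronwall[OF e_sol eh_sol init[symmetric] L_pos fields s] by simp
  moreover have "norm (e s - eh s) \<le> 2 * norm (e t0) + 2 * (s - t0) * (M + umax)"
  proof -
    have "norm (e s - e t0) \<le> (s - t0) * (M + umax)"
      using solves_on_norm_increment_le[OF e_sol s] speed e_W xb_W u_bound
      by simp
    moreover have "norm (eh s - eh t0) \<le> (s - t0) * (M + umax)"
      using solves_on_norm_increment_le[OF eh_sol s] speed eh_W xh_W u_bound
      by simp
    moreover have "norm (e s - eh s) \<le> norm (e s - e t0) + norm (eh s - eh t0)"
      using norm_triangle_ineq4[of "e s - e t0" "eh s - eh t0"] init by simp
    ultimately show ?thesis using norm_ge_zero[of "e t0"] by linarith
  qed
  ultimately show "norm (e s - eh s) \<le> min (K / L * (exp (L * (s - t0)) - 1))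
      (2 * norm (e t0) + 2 * (s - t0) * (M + umax))" by simp
qed

end
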